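(* Let $\epsilon\in(0,1)$ and $\mathcal{Z}^{(1)},\dots,\mathcal{Z}^{(p)}\in\mathbb{C}^{n_1\times\cdots\times n_d}$. Set $\mathcal{Z}^{(0,t)}:=\mathcal{Z}^{(t)}$ for $t\in[p]$. Inductively for $j=1,\dots,d$: let $\mathbf{A}_j\in\mathbb{C}^{m_j\times n_j}$ be an $(\epsilon/(ed))$-JL embedding into $\mathbb{C}^{m_j}$ of the set $\mathcal{S}_j$ consisting of all mode-$j$ fibers of all the tensors $\mathcal{Z}^{(j-1,t)}\in\mathbb{C}^{m_1\times\cdots\times m_{j-1}\times n_j\times\cdots\times n_d}$, $t\in[p]$ (i.e., all vectors $\mathcal{Z}^{(j-1,t)}_{i_1,\dots,i_{j-1},:,i_{j+1},\dots,i_d}\in\mathbb{C}^{n_j}$ with $i_\ell\in[m_\ell]$ for $\ell<j$ and $i_\ell\in[n_\ell]$ for $\ell>j$), and then set $\mathcal{Z}^{(j,t)}:=\mathcal{Z}^{(j-1,t)}\times_j\mathbf{A}_j$. Then for all $t\in[p]$, $$\big|\|\mathcal{Z}^{(t)}\|^2-\|\mathcal{Z}^{(t)}\times_1\mathbf{A}_1\cdots\times_d\mathbf{A}_d\|^2\big|\le\epsilon\|\mathcal{Z}^{(t)}\|^2 .$$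
   Context: $\|\cdot\|$ is the Euclidean norm of a tensor (square root of the sum of squared absolute values of entries); $e$ is Euler's number. The $j$-mode product is $(\mathcal{Z}\times_j\mathbf{U})_{i_1,\dots,\ell,\dots,i_d}=\sum_{i_j}\mathcal{Z}_{i_1,\dots,i_j,\dots,i_d}\mathbf{U}_{\ell,i_j}$. A mode-$j$ fiber of a tensor is the vector obtained by fixing all indices except the $j$-th. A matrix $\mathbf{A}$ is an $\epsilon$-JL embedding of $S$ if $\|\mathbf{A}x\|_2^2=(1+\epsilon_x)\|x\|_2^2$ with $\epsilon_x\in(-\epsilon,\epsilon)$ for all $x\in S$. *)

theory Defs
  imports Complex_Main
begin

text \<open>Conventions: modes are 0-based (mode j in the paper is j-1 here).
  An order-d tensor with dimension function dims is a function from index tuples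
  (nat => nat) to complex numbers; only indices in tidx dims d are meaningful.
  Vectors in C^n are functions nat => complex (only entries r < n meaningful),
  matrices in C^(m x n) are functions nat => nat => complex, entry (l, r).\<close>

type_synonym tensor = "(nat \<Rightarrow> nat) \<Rightarrow> complex"
type_synonym cmat = "nat \<Rightarrow> nat \<Rightarrow> complex"

definition tidx :: "(nat \<Rightarrow> nat) \<Rightarrow> nat \<Rightarrow> (nat \<Rightarrow> nat) set" where
  "tidx dims d = {i. (\<forall>l<d. i l < dims l) \<and> (\<forall>l\<ge>d. i l = 0)}"

definition tnorm2 :: "(nat \<Rightarrow> nat) \<Rightarrow> nat \<Rightarrow> tensor \<Rightarrow> real" where
  "tnorm2 dims d Z = (\<Sum>i\<in>tidx dims d. (cmod (Z i))\<^sup>2)"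

definition vnorm2 :: "nat \<Rightarrow> (nat \<Rightarrow> complex) \<Rightarrow> real" where
  "vnorm2 n x = (\<Sum>r<n. (cmod (x r))\<^sup>2)"

definition mat_vec :: "nat \<Rightarrow> cmat \<Rightarrow> (nat \<Rightarrow> complex) \<Rightarrow> (nat \<Rightarrow> complex)" where
  "mat_vec n A x = (\<lambda>l. \<Sum>r<n. A l r * x r)"

definition JL_embedding :: "real \<Rightarrow> nat \<Rightarrow> nat \<Rightarrow> cmat \<Rightarrow> (nat \<Rightarrow> complex) set \<Rightarrow> bool" where
  "JL_embedding eps m n A S \<longleftrightarrow>
     (\<forall>x\<in>S. \<exists>ex. -eps < ex \<and> ex < eps \<and> vnorm2 m (mat_vec n A x) = (1 + ex) * vnorm2 n x)"

definition mode_prod :: "nat \<Rightarrow> nat \<Rightarrow> tensor \<Rightarrow> cmat \<Rightarrow> tensor" where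
  "mode_prod j k Z U = (\<lambda>i. \<Sum>r<k. Z (i(j := r)) * U (i j) r)"

fun mode_prods :: "(nat \<Rightarrow> nat) \<Rightarrow> (nat \<Rightarrow> cmat) \<Rightarrow> tensor \<Rightarrow> nat \<Rightarrow> tensor" where
  "mode_prods n A Z 0 = Z"
| "mode_prods n A Z (Suc j) = mode_prod j (n j) (mode_prods n A Z j) (A j)"

definition dims_after :: "(nat \<Rightarrow> nat) \<Rightarrow> (nat \<Rightarrow> nat) \<Rightarrow> nat \<Rightarrow> nat \<Rightarrow> nat" where
  "dims_after m n j = (\<lambda>l. if l < j then m l else n l)"

definition fiber :: "nat \<Rightarrow> nat \<Rightarrow> tensor \<Rightarrow> (nat \<Rightarrow> nat) \<Rightarrow> (nat \<Rightarrow> complex)" where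
  "fiber j k W i = (\<lambda>r. if r < k then W (i(j := r)) else 0)"

definition fibers :: "(nat \<Rightarrow> nat) \<Rightarrow> nat \<Rightarrow> nat \<Rightarrow> tensor \<Rightarrow> (nat \<Rightarrow> complex) set" where
  "fibers dims d j W = fiber j (dims j) W ` tidx dims d"

end

theory Submission
  imports Defs
begin

text \<open>A mode product acts on every mode-\<open>j\<close> fiber separately, and the squared norm of a
  tensor is the sum of the squared norms of its mode-\<open>j\<close> fibers. Hence the \<open>j\<close>-th product
  changes the squared norm by a factor in \<open>[1 - \<delta>, 1 + \<delta>]\<close> with \<open>\<delta> = \<epsilon>/(e d)\<close>, and after
  all \<open>d\<close> products by a factor in \<open>[(1 - \<delta>)\<^sup>d, (1 + \<delta>)\<^sup>d]\<close>. Bernoulli's inequality gives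
  \<open>(1 - \<delta>)\<^sup>d \<ge> 1 - \<epsilon>/e\<close>, and \<open>(1 + \<delta>)\<^sup>d \<le> 1/(1 - \<delta>)\<^sup>d \<le> 1/(1 - \<epsilon>/e) \<le> 1 + \<epsilon>\<close>.\<close>

lemma tidx_cong: "(\<And>l. l < d \<Longrightarrow> D l = D' l) \<Longrightarrow> tidx D d = tidx D' d"
  unfolding tidx_def by auto

lemma sum_tidx_split:
  assumes "j < d"
  shows "sum f (tidx D d) = (\<Sum>b\<in>tidx (D(j := 1)) d. \<Sum>r<D j. f (b(j := r)))"
proof -
  have "sum f (tidx D d) = (\<Sum>(b, r)\<in>tidx (D(j := 1)) d \<times> {..<D j}. f (b(j := r)))"
    by (rule sum.reindex_bij_witness[where j = "\<lambda>i. (i(j := 0), i j)" and i = "\<lambda>(b, r). b(j := r)"])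
       (use assms in \<open>fastforce simp: tidx_def fun_eq_iff\<close>)+
  then show ?thesis
    by (simp add: sum.cartesian_product)
qed

lemma tnorm2_eq_sum_fibers:
  assumes "j < d"
  shows "tnorm2 D d W = (\<Sum>b\<in>tidx (D(j := 1)) d. vnorm2 (D j) (fiber j (D j) W b))"
  unfolding tnorm2_def sum_tidx_split[OF assms, of _ D] by (simp add: vnorm2_def fiber_def)

lemma tnorm2_mode_prod_eq_sum_fibers:
  assumes "j < d"
  shows "tnorm2 (D(j := k)) d (mode_prod j (D j) W U)
    = (\<Sum>b\<in>tidx (D(j := 1)) d. vnorm2 k (mat_vec (D j) U (fiber j (D j) W b)))"
  unfolding tnorm2_def sum_tidx_split[OF assms, of _ "D(j := k)"]
  by (simp add: vnorm2_def fiber_def mode_prod_def mat_vec_def mult.commute)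

lemma JL_embedding_subset: "JL_embedding e k n U S \<Longrightarrow> T \<subseteq> S \<Longrightarrow> JL_embedding e k n U T"
  unfolding JL_embedding_def by blast

lemma JL_embedding_abs_diff_le:
  assumes "JL_embedding e k n U S" "x \<in> S"
  shows "\<bar>vnorm2 k (mat_vec n U x) - vnorm2 n x\<bar> \<le> e * vnorm2 n x"
proof -
  obtain ex where ex: "-e < ex" "ex < e" "vnorm2 k (mat_vec n U x) = (1 + ex) * vnorm2 n x"
    using assms unfolding JL_embedding_def by blast
  have "0 \<le> vnorm2 n x"
    unfolding vnorm2_def by (simp add: sum_nonneg)
  then have "\<bar>ex * vnorm2 n x\<bar> \<le> e * vnorm2 n x"
    using ex(1,2) by (simp add: abs_mult mult_right_mono)
  then show ?thesis
    using ex(3) by (simp add: algebra_simps)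
qed

lemma tnorm2_mode_prod_JL:
  assumes "j < d" and JL: "JL_embedding e k (D j) U (fibers D d j W)"
  shows "\<bar>tnorm2 (D(j := k)) d (mode_prod j (D j) W U) - tnorm2 D d W\<bar> \<le> e * tnorm2 D d W"
proof -
  define B where "B = tidx (D(j := 1)) d"
  define x where "x b = fiber j (D j) W b" for b
  have norms: "tnorm2 (D(j := k)) d (mode_prod j (D j) W U) = (\<Sum>b\<in>B. vnorm2 k (mat_vec (D j) U (x b)))"
    "tnorm2 D d W = (\<Sum>b\<in>B. vnorm2 (D j) (x b))"
    unfolding B_def x_def
    by (rule tnorm2_mode_prod_eq_sum_fibers[OF assms(1)] tnorm2_eq_sum_fibers[OF assms(1)])+
  have fiber_bound: "\<bar>vnorm2 k (mat_vec (D j) U (x b)) - vnorm2 (D j) (x b)\<bar> \<le> e * vnorm2 (D j) (x b)"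
    if "b \<in> B" for b
  proof (cases "D j = 0")
    case True
    then show ?thesis by (simp add: vnorm2_def mat_vec_def)
  next
    case False
    with \<open>b \<in> B\<close> have "b \<in> tidx D d"
      unfolding B_def tidx_def by (auto split: if_splits)
    then have "x b \<in> fibers D d j W"
      unfolding fibers_def x_def by simp
    with JL show ?thesis
      by (rule JL_embedding_abs_diff_le)
  qed
  have "\<bar>(\<Sum>b\<in>B. vnorm2 k (mat_vec (D j) U (x b))) - (\<Sum>b\<in>B. vnorm2 (D j) (x b))\<bar>
      \<le> (\<Sum>b\<in>B. \<bar>vnorm2 k (mat_vec (D j) U (x b)) - vnorm2 (D j) (x b)\<bar>)"
    unfolding sum_subtractf[symmetric] by (rule sum_abs)
  also have "\<dots> \<le> (\<Sum>b\<in>B. e * vnorm2 (D j) (x b))"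
    using fiber_bound by (rule sum_mono)
  finally show ?thesis
    unfolding norms sum_distrib_left .
qed

lemma relative_steps_power_bounds:
  fixes N :: "nat \<Rightarrow> real"
  assumes "0 \<le> \<delta>" "\<delta> \<le> 1" and "\<And>j. j < k \<Longrightarrow> \<bar>N (Suc j) - N j\<bar> \<le> \<delta> * N j"
  shows "(1 - \<delta>) ^ k * N 0 \<le> N k \<and> N k \<le> (1 + \<delta>) ^ k * N 0"
  using assms(3)
proof (induction k)
  case 0
  then show ?case by simp
next
  case (Suc k)
  then have IH: "(1 - \<delta>) ^ k * N 0 \<le> N k" "N k \<le> (1 + \<delta>) ^ k * N 0"
    and step: "(1 - \<delta>) * N k \<le> N (Suc k)" "N (Suc k) \<le> (1 + \<delta>) * N k"
    by (auto simp: abs_le_iff algebra_simps)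
  have "(1 - \<delta>) * ((1 - \<delta>) ^ k * N 0) \<le> (1 - \<delta>) * N k"
    using IH(1) assms(2) by (intro mult_left_mono) auto
  moreover have "(1 + \<delta>) * N k \<le> (1 + \<delta>) * ((1 + \<delta>) ^ k * N 0)"
    using IH(2) assms(1) by (intro mult_left_mono) auto
  ultimately show ?case
    using step by (simp add: mult.assoc)
qed

text \<open>For \<open>d = 0\<close> division by zero makes \<open>\<delta> = 0\<close>, so the bounds hold trivially.\<close>

lemma power_bounds_eps_div_exp:
  fixes eps :: real and d :: nat
  assumes "0 \<le> eps" "eps \<le> 1"
  defines "\<delta> \<equiv> eps / (exp 1 * real d)"
  shows "0 \<le> \<delta>" "\<delta> \<le> 1" "1 - eps \<le> (1 - \<delta>) ^ d" "(1 + \<delta>) ^ d \<le> 1 + eps"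
proof -
  have exp_ge_2: "2 \<le> exp (1::real)"
    using exp_ge_add_one_self[of 1] by simp
  have eps_div_exp: "eps / exp 1 \<le> eps / 2"
    by (rule divide_left_mono) (use exp_ge_2 assms(1) in auto)
  show \<delta>_nonneg: "0 \<le> \<delta>"
    unfolding \<delta>_def using assms(1) by simp
  have "real d * \<delta> = (if d = 0 then 0 else eps / exp 1)"
    unfolding \<delta>_def by (simp add: field_simps)
  then have d_\<delta>: "real d * \<delta> \<le> eps / exp 1"
    using assms(1) by (simp split: if_splits)
  have "\<delta> \<le> real d * \<delta>"
    using \<delta>_nonneg mult_right_mono[of 1 "real d" \<delta>] by (cases "d = 0") (simp_all add: \<delta>_def)
  then show \<delta>_le_1: "\<delta> \<le> 1"
    using d_\<delta> eps_div_exp assms(2) by linarith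
  have lower: "1 - eps / exp 1 \<le> (1 - \<delta>) ^ d"
    using Bernoulli_inequality[of "-\<delta>" d] \<delta>_le_1 d_\<delta> by simp
  then show "1 - eps \<le> (1 - \<delta>) ^ d"
    using eps_div_exp assms(1) by linarith
  have "(1 + \<delta>) ^ d * (1 - eps / exp 1) \<le> (1 + \<delta>) ^ d * (1 - \<delta>) ^ d"
    using lower \<delta>_nonneg by (intro mult_left_mono) auto
  also have "\<dots> = (1 - \<delta>\<^sup>2) ^ d"
    by (simp add: power_mult_distrib[symmetric] power2_eq_square algebra_simps)
  also have "\<dots> \<le> 1"
    using \<delta>_nonneg \<delta>_le_1 by (intro power_le_one) (auto simp: power2_eq_square mult_le_one)
  also have "\<dots> \<le> (1 + eps) * (1 - eps / exp 1)"
    using mult_left_mono[of "1 + eps" "exp 1" eps] exp_ge_2 assms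
    by (simp add: algebra_simps divide_le_eq)
  finally have "(1 + \<delta>) ^ d * (1 - eps / exp 1) \<le> (1 + eps) * (1 - eps / exp 1)" .
  moreover have "0 < 1 - eps / exp 1"
    using eps_div_exp assms(2) by linarith
  ultimately show "(1 + \<delta>) ^ d \<le> 1 + eps"
    by (simp add: mult_le_cancel_right_pos)
qed

lemma dims_after_0: "dims_after m n 0 = n"
  unfolding dims_after_def by auto

lemma dims_after_Suc: "dims_after m n (Suc j) = (dims_after m n j)(j := m j)"
  unfolding dims_after_def by auto

lemma dims_after_at: "dims_after m n j j = n j"
  unfolding dims_after_def by simp

theorem lemma12:
  fixes eps :: real and d p :: nat and n m :: "nat \<Rightarrow> nat"
    and Z :: "nat \<Rightarrow> tensor" and A :: "nat \<Rightarrow> cmat"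
  assumes "0 < eps" "eps < 1"
    and "\<And>j. j < d \<Longrightarrow> JL_embedding (eps / (exp 1 * real d)) (m j) (n j) (A j)
            (\<Union>t<p. fibers (dims_after m n j) d j (mode_prods n A (Z t) j))"
  shows "\<forall>t<p. \<bar>tnorm2 n d (Z t) - tnorm2 m d (mode_prods n A (Z t) d)\<bar>
                 \<le> eps * tnorm2 n d (Z t)"
proof (intro allI impI)
  fix t assume "t < p"
  define \<delta> where "\<delta> = eps / (exp 1 * real d)"
  define N where "N j = tnorm2 (dims_after m n j) d (mode_prods n A (Z t) j)" for j
  have N_0: "N 0 = tnorm2 n d (Z t)"
    unfolding N_def dims_after_0 by simp
  have "tidx (dims_after m n d) d = tidx m d"
    by (rule tidx_cong) (simp add: dims_after_def)
  then have N_d: "N d = tnorm2 m d (mode_prods n A (Z t) d)"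
    unfolding N_def tnorm2_def by simp
  have steps: "\<bar>N (Suc j) - N j\<bar> \<le> \<delta> * N j" if "j < d" for j
  proof -
    have "JL_embedding \<delta> (m j) (dims_after m n j j) (A j)
        (fibers (dims_after m n j) d j (mode_prods n A (Z t) j))"
      unfolding \<delta>_def dims_after_at
      by (rule JL_embedding_subset[OF assms(3)[OF \<open>j < d\<close>]]) (use \<open>t < p\<close> in blast)
    from tnorm2_mode_prod_JL[OF \<open>j < d\<close> this] show ?thesis
      unfolding N_def by (simp add: dims_after_Suc dims_after_at)
  qed
  note bounds = power_bounds_eps_div_exp[of eps d, folded \<delta>_def]
  have "(1 - \<delta>) ^ d * N 0 \<le> N d \<and> N d \<le> (1 + \<delta>) ^ d * N 0"
    using bounds(1,2) assms(1,2) steps by (intro relative_steps_power_bounds) auto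
  moreover have "0 \<le> N 0"
    unfolding N_def tnorm2_def by (simp add: sum_nonneg)
  then have "(1 - eps) * N 0 \<le> (1 - \<delta>) ^ d * N 0" "(1 + \<delta>) ^ d * N 0 \<le> (1 + eps) * N 0"
    using bounds(3,4) assms(1,2) by (simp_all add: mult_right_mono)
  ultimately show "\<bar>tnorm2 n d (Z t) - tnorm2 m d (mode_prods n A (Z t) d)\<bar> \<le> eps * tnorm2 n d (Z t)"
    unfolding N_0 [symmetric] N_d [symmetric] by (simp add: abs_le_iff algebra_simps)
qed

end
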